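(* Let $T$ be a decomposition tree of a distance-hereditary graph $G$, and let $v$ be an internal node of $T$ labeled $\odot$ with left child $v_l$ and right child $v_r$, such that property (P) holds at $v_l$ and at $v_r$. Then $\hat\alpha(v)=\hat\alpha(v_l)+\hat\alpha(v_r)$.
   Context: All graphs are finite, simple, undirected. For a graph $H$ and $S\subseteq V(H)$, $N_H[S]$ is $S$ together with all vertices adjacent to a vertex of $S$, and $H[S]$ is the induced subgraph. Graphs carry a "twin set": a single-vertex graph on $x$ has twin set $\{x\}$. For vertex-disjoint graphs $G_l,G_r$ with twin sets $TS(G_l),TS(G_r)$: the true twin operation $G_l\otimes G_r$ has vertex set $V(G_l)\cup V(G_r)$, edge set $E(G_l)\cup E(G_r)\cup\{uw: u\in TS(G_l), w\in TS(G_r)\}$ and twin set $TS(G_l)\cup TS(G_r)$; the false twin operation $G_l\odot G_r$ has vertex set $V(G_l)\cup V(G_r)$, edge set $E(G_l)\cup E(G_r)$, twin set $TS(G_l)\cup TS(G_r)$; the attachment operation $G_l\oplus G_r$ has the same vertex and edge sets as $G_l\otimes G_r$ and twin set $TS(G_l)$. A decomposition tree $T$ of $G$ is a rooted binary tree whose leaves are in bijection with $V(G)$, each internal node having a left and a right child and a label in $\{\otimes,\odot,\oplus\}$; for each node $v$ define $\hat G(v)$ and $\hat{TS}(v)$ recursively: for a leaf $x$, the single-vertex graph on $x$ with twin set $\{x\}$; for an internal node $v$ with label $\circ$ and children $v_l,v_r$, $\hat G(v)=\hat G(v_l)\circ\hat G(v_r)$ with the corresponding twin set; one requires $\hat G(\text{root})=G$.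 Then $\hat G(v)$ is the subgraph of $G$ induced by the set $\hat V(v)$ of leaves below $v$. For a node $u$ and $0\le k\le|\hat{TS}(u)|$, call $S\subseteq\hat V(u)$ $k$-feasible if $\hat V(u)\setminus\hat{TS}(u)\subseteq N_{\hat G(u)}[S]$ and there is $X\subseteq S\cap\hat{TS}(u)$ with $|X|=k$ such that $\hat G(u)[S\setminus X]$ has a perfect matching. $\hat\gamma_k(u)$ is the minimum size of a $k$-feasible set. $\hat{min}(u)=\min\{\hat\gamma_k(u):0\le k\le|\hat{TS}(u)|\}$, and $\hat\alpha(u)$, $\hat\beta(u)$ are the smallest and the largest $k$ with $\hat\gamma_k(u)=\hat{min}(u)$. Property (P) holds at $u$ if for every $0\le k\le|\hat{TS}(u)|$: $\hat\gamma_k(u)=\hat{min}(u)+\hat\alpha(u)-k$ when $k\le\hat\alpha(u)$; $\hat\gamma_k(u)=\hat{min}(u)+k-\hat\beta(u)$ when $k\ge\hat\beta(u)$; $\hat\gamma_k(u)=\hat{min}(u)$ when $\hat\alpha(u)<k<\hat\beta(u)$ and $k-\hat\alpha(u)$ is even; and $\hat\gamma_k(u)=\hat{min}(u)+1$ otherwise. *)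

theory Defs
  imports Main
begin

definition simple_graph :: "'a set \<Rightarrow> 'a set set \<Rightarrow> bool" where
  "simple_graph V E \<longleftrightarrow> finite V \<and> (\<forall>e\<in>E. \<exists>u w. u \<noteq> w \<and> u \<in> V \<and> w \<in> V \<and> e = {u, w})"

fun walk_in :: "'a set set \<Rightarrow> 'a set \<Rightarrow> 'a list \<Rightarrow> bool" where
  "walk_in E S [] = False"
| "walk_in E S [x] = (x \<in> S)"
| "walk_in E S (x # y # xs) = (x \<in> S \<and> {x, y} \<in> E \<and> walk_in E S (y # xs))"

definition connected_in :: "'a set set \<Rightarrow> 'a set \<Rightarrow> bool" where
  "connected_in E S \<longleftrightarrow> (\<forall>u\<in>S. \<forall>w\<in>S. \<exists>xs. walk_in E S xs \<and> hd xs = u \<and> last xs = w)"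

definition dist_in :: "'a set set \<Rightarrow> 'a set \<Rightarrow> 'a \<Rightarrow> 'a \<Rightarrow> nat" where
  "dist_in E S u w = (LEAST n. \<exists>xs. walk_in E S xs \<and> hd xs = u \<and> last xs = w \<and> length xs = Suc n)"

definition distance_hereditary :: "'a set \<Rightarrow> 'a set set \<Rightarrow> bool" where
  "distance_hereditary V E \<longleftrightarrow> simple_graph V E \<and>
     (\<forall>S \<subseteq> V. connected_in E S \<longrightarrow> (\<forall>u\<in>S. \<forall>w\<in>S. dist_in E S u w = dist_in E V u w))"

datatype lab = TrueTwin | FalseTwin | Attach

datatype 'a dtree = Leaf 'a | Node lab "'a dtree" "'a dtree"

fun tV :: "'a dtree \<Rightarrow> 'a set" where
  "tV (Leaf x) = {x}"
| "tV (Node _ l r) = tV l \<union> tV r"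

fun tTS :: "'a dtree \<Rightarrow> 'a set" where
  "tTS (Leaf x) = {x}"
| "tTS (Node TrueTwin l r) = tTS l \<union> tTS r"
| "tTS (Node FalseTwin l r) = tTS l \<union> tTS r"
| "tTS (Node Attach l r) = tTS l"

fun tE :: "'a dtree \<Rightarrow> 'a set set" where
  "tE (Leaf x) = {}"
| "tE (Node TrueTwin l r) = tE l \<union> tE r \<union> {{u, w} | u w. u \<in> tTS l \<and> w \<in> tTS r}"
| "tE (Node FalseTwin l r) = tE l \<union> tE r"
| "tE (Node Attach l r) = tE l \<union> tE r \<union> {{u, w} | u w. u \<in> tTS l \<and> w \<in> tTS r}"

fun distinct_leaves :: "'a dtree \<Rightarrow> bool" where
  "distinct_leaves (Leaf x) = True"
| "distinct_leaves (Node _ l r) = (distinct_leaves l \<and> distinct_leaves r \<and> tV l \<inter> tV r = {})"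

fun subtrees :: "'a dtree \<Rightarrow> 'a dtree set" where
  "subtrees (Leaf x) = {Leaf x}"
| "subtrees (Node c l r) = insert (Node c l r) (subtrees l \<union> subtrees r)"

definition decomposition_tree :: "'a dtree \<Rightarrow> 'a set \<Rightarrow> 'a set set \<Rightarrow> bool" where
  "decomposition_tree T V E \<longleftrightarrow> distinct_leaves T \<and> tV T = V \<and> tE T = E"

definition closed_nbhd :: "'a set set \<Rightarrow> 'a set \<Rightarrow> 'a set" where
  "closed_nbhd E S = S \<union> {w. \<exists>u\<in>S. {u, w} \<in> E}"

definition induced_edges :: "'a set set \<Rightarrow> 'a set \<Rightarrow> 'a set set" where
  "induced_edges E S = {e \<in> E. e \<subseteq> S}"

definition has_perfect_matching :: "'a set \<Rightarrow> 'a set set \<Rightarrow> bool" where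
  "has_perfect_matching S F \<longleftrightarrow> (\<exists>M \<subseteq> F. (\<forall>e\<in>M. \<forall>e'\<in>M. e \<noteq> e' \<longrightarrow> e \<inter> e' = {}) \<and> \<Union>M = S)"

definition k_feasible :: "'a dtree \<Rightarrow> nat \<Rightarrow> 'a set \<Rightarrow> bool" where
  "k_feasible u k S \<longleftrightarrow> S \<subseteq> tV u \<and> tV u - tTS u \<subseteq> closed_nbhd (tE u) S \<and>
     (\<exists>X. X \<subseteq> S \<inter> tTS u \<and> card X = k \<and>
          has_perfect_matching (S - X) (induced_edges (tE u) (S - X)))"

definition hgamma :: "'a dtree \<Rightarrow> nat \<Rightarrow> nat" where
  "hgamma u k = (LEAST n. \<exists>S. k_feasible u k S \<and> card S = n)"

definition hmin :: "'a dtree \<Rightarrow> nat" where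
  "hmin u = Min (hgamma u ` {0..card (tTS u)})"

definition halpha :: "'a dtree \<Rightarrow> nat" where
  "halpha u = Min {k. k \<le> card (tTS u) \<and> hgamma u k = hmin u}"

definition hbeta :: "'a dtree \<Rightarrow> nat" where
  "hbeta u = Max {k. k \<le> card (tTS u) \<and> hgamma u k = hmin u}"

definition propP :: "'a dtree \<Rightarrow> bool" where
  "propP u \<longleftrightarrow> (\<forall>k \<le> card (tTS u).
     (k \<le> halpha u \<longrightarrow> hgamma u k = hmin u + halpha u - k) \<and>
     (k \<ge> hbeta u \<longrightarrow> hgamma u k = hmin u + k - hbeta u) \<and>
     (halpha u < k \<and> k < hbeta u \<and> even (k - halpha u) \<longrightarrow> hgamma u k = hmin u) \<and>
     (halpha u < k \<and> k < hbeta u \<and> odd (k - halpha u) \<longrightarrow> hgamma u k = hmin u + 1))"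

end

theory Submission
  imports Defs
begin

(* At a false twin node v the graph is the disjoint union of the children's graphs and
   TS(v) = TS(v_l) \<union> TS(v_r). A k-feasible set of v therefore splits along V(v_l), V(v_r)
   into k_l- and k_r-feasible sets with k_l + k_r = k, and conversely the union of such sets
   is (k_l + k_r)-feasible. Hence gamma_k(v) is the min-plus convolution of gamma(v_l) and
   gamma(v_r), whose smallest minimiser is alpha(v_l) + alpha(v_r). *)

lemma has_perfect_matchingI:
  assumes "M \<subseteq> F" "\<forall>e\<in>M. \<forall>e'\<in>M. e \<noteq> e' \<longrightarrow> e \<inter> e' = {}" "\<Union>M = S"
  shows "has_perfect_matching S F"
  unfolding has_perfect_matching_def using assms by (intro exI[of _ M]) simp

lemma has_perfect_matchingE:
  assumes "has_perfect_matching S F"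
  obtains M where "M \<subseteq> F" "\<forall>e\<in>M. \<forall>e'\<in>M. e \<noteq> e' \<longrightarrow> e \<inter> e' = {}" "\<Union>M = S"
  using assms unfolding has_perfect_matching_def by (elim exE conjE) simp

lemma has_perfect_matching_mono:
  assumes "F \<subseteq> G" "has_perfect_matching S F"
  shows "has_perfect_matching S G"
proof -
  obtain M where "M \<subseteq> F" "\<forall>e\<in>M. \<forall>e'\<in>M. e \<noteq> e' \<longrightarrow> e \<inter> e' = {}" "\<Union>M = S"
    using assms(2) by (rule has_perfect_matchingE)
  then show ?thesis
    using assms(1) by (intro has_perfect_matchingI[of M]) auto
qed

lemma has_perfect_matching_empty: "has_perfect_matching {} F"
  by (rule has_perfect_matchingI[of "{}"]) auto

lemma has_perfect_matching_Un:
  assumes "A \<inter> B = {}" "has_perfect_matching A F" "has_perfect_matching B G"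
  shows "has_perfect_matching (A \<union> B) (F \<union> G)"
proof -
  obtain M where M: "M \<subseteq> F" "\<forall>e\<in>M. \<forall>e'\<in>M. e \<noteq> e' \<longrightarrow> e \<inter> e' = {}" "\<Union>M = A"
    using assms(2) by (rule has_perfect_matchingE)
  obtain N where N: "N \<subseteq> G" "\<forall>e\<in>N. \<forall>e'\<in>N. e \<noteq> e' \<longrightarrow> e \<inter> e' = {}" "\<Union>N = B"
    using assms(3) by (rule has_perfect_matchingE)
  have "e \<inter> e' = {}" if "e \<in> M" "e' \<in> N" for e e'
    using Union_upper[OF that(1)] Union_upper[OF that(2)] assms(1) unfolding M(3) N(3) by blast
  then have "\<forall>e\<in>M \<union> N. \<forall>e'\<in>M \<union> N. e \<noteq> e' \<longrightarrow> e \<inter> e' = {}"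
    using M(2) N(2) by (metis Int_commute UnE)
  moreover have "M \<union> N \<subseteq> F \<union> G" "\<Union>(M \<union> N) = A \<union> B"
    using M(1,3) N(1,3) by auto
  ultimately show ?thesis
    by (intro has_perfect_matchingI)
qed

lemma has_perfect_matching_insert_edge:
  assumes "a \<notin> S" "b \<notin> S" "has_perfect_matching S F"
  shows "has_perfect_matching (insert a (insert b S)) (insert {a, b} F)"
proof -
  obtain M where M: "M \<subseteq> F" "\<forall>e\<in>M. \<forall>e'\<in>M. e \<noteq> e' \<longrightarrow> e \<inter> e' = {}" "\<Union>M = S"
    using assms(3) by (rule has_perfect_matchingE)
  have "e \<inter> {a, b} = {}" if "e \<in> M" for e
    using Union_upper[OF that] assms(1,2) unfolding M(3) by blast
  then have "\<forall>e\<in>insert {a, b} M. \<forall>e'\<in>insert {a, b} M. e \<noteq> e' \<longrightarrow> e \<inter> e' = {}"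
    using M(2) by blast
  moreover have "insert {a, b} M \<subseteq> insert {a, b} F" "\<Union>(insert {a, b} M) = insert a (insert b S)"
    using M(1,3) by auto
  ultimately show ?thesis
    by (intro has_perfect_matchingI)
qed

lemma has_perfect_matching_restrict:
  assumes "has_perfect_matching S F" "\<forall>e\<in>F. e \<inter> W \<noteq> {} \<longrightarrow> e \<subseteq> W"
  shows "has_perfect_matching (S \<inter> W) {e \<in> F. e \<inter> W \<noteq> {}}"
proof -
  obtain M where M: "M \<subseteq> F" "\<forall>e\<in>M. \<forall>e'\<in>M. e \<noteq> e' \<longrightarrow> e \<inter> e' = {}" "\<Union>M = S"
    using assms(1) by (rule has_perfect_matchingE)
  have "\<Union>{e \<in> M. e \<inter> W \<noteq> {}} = S \<inter> W"
    unfolding M(3)[symmetric] using M(1) assms(2) by blast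
  moreover have "{e \<in> M. e \<inter> W \<noteq> {}} \<subseteq> {e \<in> F. e \<inter> W \<noteq> {}}"
    using M(1) by blast
  ultimately show ?thesis
    using M(2) by (intro has_perfect_matchingI) auto
qed

lemma closed_nbhd_mono: "E \<subseteq> E' \<Longrightarrow> S \<subseteq> S' \<Longrightarrow> closed_nbhd E S \<subseteq> closed_nbhd E' S'"
  unfolding closed_nbhd_def by blast

lemma induced_edges_mono: "E \<subseteq> E' \<Longrightarrow> S \<subseteq> S' \<Longrightarrow> induced_edges E S \<subseteq> induced_edges E' S'"
  unfolding induced_edges_def by auto

(* k-feasibility with the exceptional set X made explicit, for an arbitrary graph (V, E) with
   twin set TS, so that disjoint unions can be handled at the level of sets. *)
definition feasible_pair :: "'a set \<Rightarrow> 'a set \<Rightarrow> 'a set set \<Rightarrow> 'a set \<Rightarrow> 'a set \<Rightarrow> bool" where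
  "feasible_pair V TS E S X \<longleftrightarrow> S \<subseteq> V \<and> V - TS \<subseteq> closed_nbhd E S \<and> X \<subseteq> S \<inter> TS \<and>
     has_perfect_matching (S - X) (induced_edges E (S - X))"

lemma k_feasible_iff_feasible_pair:
  "k_feasible u k S \<longleftrightarrow> (\<exists>X. feasible_pair (tV u) (tTS u) (tE u) S X \<and> card X = k)"
  unfolding k_feasible_def feasible_pair_def by auto

lemma feasible_pair_Un:
  assumes "feasible_pair V1 TS1 E1 S1 X1" "feasible_pair V2 TS2 E2 S2 X2"
    and "V1 \<inter> V2 = {}" "E1 \<union> E2 \<subseteq> E"
  shows "feasible_pair (V1 \<union> V2) (TS1 \<union> TS2) E (S1 \<union> S2) (X1 \<union> X2)"
proof -
  have S: "S1 \<subseteq> V1" "S2 \<subseteq> V2" and X: "X1 \<subseteq> S1 \<inter> TS1" "X2 \<subseteq> S2 \<inter> TS2"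
    and dom: "V1 - TS1 \<subseteq> closed_nbhd E1 S1" "V2 - TS2 \<subseteq> closed_nbhd E2 S2"
    and pm: "has_perfect_matching (S1 - X1) (induced_edges E1 (S1 - X1))"
      "has_perfect_matching (S2 - X2) (induced_edges E2 (S2 - X2))"
    using assms(1,2) unfolding feasible_pair_def by auto
  have "closed_nbhd E1 S1 \<subseteq> closed_nbhd E (S1 \<union> S2)" "closed_nbhd E2 S2 \<subseteq> closed_nbhd E (S1 \<union> S2)"
    using assms(4) by (simp_all add: closed_nbhd_mono)
  then have "V1 \<union> V2 - (TS1 \<union> TS2) \<subseteq> closed_nbhd E (S1 \<union> S2)"
    using dom by blast
  moreover have split: "S1 \<union> S2 - (X1 \<union> X2) = (S1 - X1) \<union> (S2 - X2)" "(S1 - X1) \<inter> (S2 - X2) = {}"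
    using S X assms(3) by blast+
  have "has_perfect_matching (S1 \<union> S2 - (X1 \<union> X2))
      (induced_edges E1 (S1 - X1) \<union> induced_edges E2 (S2 - X2))"
    unfolding split(1) using has_perfect_matching_Un[OF split(2) pm] .
  moreover have "induced_edges E1 (S1 - X1) \<union> induced_edges E2 (S2 - X2)
      \<subseteq> induced_edges E (S1 \<union> S2 - (X1 \<union> X2))"
    unfolding split(1) using assms(4) by (simp add: induced_edges_mono le_supI1 le_supI2)
  ultimately show ?thesis
    unfolding feasible_pair_def using S X has_perfect_matching_mono by blast
qed

lemma feasible_pair_restrict:
  assumes f: "feasible_pair (V1 \<union> V2) (TS1 \<union> TS2) (E1 \<union> E2) S X"
    and "V1 \<inter> V2 = {}" "TS2 \<subseteq> V2" "\<forall>e\<in>E1. e \<subseteq> V1" "\<forall>e\<in>E2. e \<subseteq> V2"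
  shows "feasible_pair V1 TS1 E1 (S \<inter> V1) (X \<inter> V1)"
proof -
  have X: "X \<subseteq> S \<inter> (TS1 \<union> TS2)"
    and dom: "V1 \<union> V2 - (TS1 \<union> TS2) \<subseteq> closed_nbhd (E1 \<union> E2) S"
    and pm: "has_perfect_matching (S - X) (induced_edges (E1 \<union> E2) (S - X))"
    using f unfolding feasible_pair_def by auto
  have "x \<in> closed_nbhd E1 (S \<inter> V1)" if x: "x \<in> V1 - TS1" for x
  proof -
    have "x \<notin> V2"
      using x assms(2) by blast
    then have "x \<in> closed_nbhd (E1 \<union> E2) S"
      using x assms(3) dom by blast
    then consider "x \<in> S" | u where "u \<in> S" "{u, x} \<in> E1" | u where "{u, x} \<in> E2"
      unfolding closed_nbhd_def by blast
    then show ?thesis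
    proof cases
      case 1
      then show ?thesis using x unfolding closed_nbhd_def by blast
    next
      case (2 u)
      then have "u \<in> V1" using assms(4) by blast
      then show ?thesis using 2 unfolding closed_nbhd_def by blast
    next
      case (3 u)
      then show ?thesis using \<open>x \<notin> V2\<close> assms(5) by blast
    qed
  qed
  moreover have "has_perfect_matching (S \<inter> V1 - X \<inter> V1) (induced_edges E1 (S \<inter> V1 - X \<inter> V1))"
  proof -
    have "has_perfect_matching ((S - X) \<inter> V1) {e \<in> induced_edges (E1 \<union> E2) (S - X). e \<inter> V1 \<noteq> {}}"
      using assms(2,4,5) by (intro has_perfect_matching_restrict[OF pm]) (auto simp: induced_edges_def)
    moreover have "{e \<in> induced_edges (E1 \<union> E2) (S - X). e \<inter> V1 \<noteq> {}}
        \<subseteq> induced_edges E1 (S \<inter> V1 - X \<inter> V1)"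
      using assms(2,4,5) unfolding induced_edges_def by blast
    moreover have "(S - X) \<inter> V1 = S \<inter> V1 - X \<inter> V1"
      by blast
    ultimately show ?thesis
      using has_perfect_matching_mono by simp
  qed
  ultimately show ?thesis
    unfolding feasible_pair_def using X assms(2,3) by blast
qed

(* The vertices of B lose their twin status and must become dominated: either S already
   dominates them through a vertex of A, or a new matching edge ab is added. *)
lemma feasible_pair_attach:
  assumes f: "feasible_pair V (A \<union> B) E S X"
    and "X \<subseteq> A" "A \<noteq> {}" "A \<subseteq> V" "B \<subseteq> V" and AB: "\<forall>a\<in>A. \<forall>b\<in>B. {a, b} \<in> E"
  shows "\<exists>S'. feasible_pair V A E S' X"
proof -
  have S: "S \<subseteq> V" and dom: "V - (A \<union> B) \<subseteq> closed_nbhd E S"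
    and pm: "has_perfect_matching (S - X) (induced_edges E (S - X))" and XS: "X \<subseteq> S"
    using f unfolding feasible_pair_def by auto
  show ?thesis
  proof (cases "S \<inter> A \<noteq> {} \<or> B \<subseteq> S")
    case True
    have "B \<subseteq> closed_nbhd E S"
      using True AB unfolding closed_nbhd_def by blast
    then have "V - A \<subseteq> closed_nbhd E S"
      using dom by blast
    then show ?thesis
      using S XS pm assms(2) unfolding feasible_pair_def by blast
  next
    case False
    then obtain a b where ab: "a \<in> A" "a \<notin> S" "b \<in> B" "b \<notin> S"
      using assms(3) by blast
    define S' where "S' = insert a (insert b S)"
    have "closed_nbhd E S \<subseteq> closed_nbhd E S'"
      unfolding S'_def by (simp add: closed_nbhd_mono subset_insertI2)
    moreover have "B \<subseteq> closed_nbhd E S'"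
      using AB ab(1) unfolding closed_nbhd_def S'_def by blast
    ultimately have "V - A \<subseteq> closed_nbhd E S'"
      using dom by blast
    moreover have "has_perfect_matching (S' - X) (induced_edges E (S' - X))"
    proof -
      have eq: "S' - X = insert a (insert b (S - X))"
        using ab(2,4) XS unfolding S'_def by blast
      have "insert {a, b} (induced_edges E (S - X)) \<subseteq> induced_edges E (S' - X)"
        using AB ab(1,3) unfolding eq induced_edges_def by blast
      moreover have "has_perfect_matching (S' - X) (insert {a, b} (induced_edges E (S - X)))"
        unfolding eq using ab(2,4) pm by (intro has_perfect_matching_insert_edge) auto
      ultimately show ?thesis
        by (rule has_perfect_matching_mono)
    qed
    moreover have "S' \<subseteq> V"
      using S ab(1,3) assms(4,5) unfolding S'_def by blast
    moreover have "X \<subseteq> S' \<inter> A"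
      using XS assms(2) unfolding S'_def by blast
    ultimately have "feasible_pair V A E S' X"
      unfolding feasible_pair_def by blast
    then show ?thesis ..
  qed
qed

lemma finite_tV: "finite (tV u)"
  by (induction u) auto

lemma tTS_subset_tV: "tTS u \<subseteq> tV u"
  by (induction u rule: tTS.induct) auto

lemma tTS_nonempty: "tTS u \<noteq> {}"
  by (induction u rule: tTS.induct) auto

lemma tTS_Node_twin: "c \<noteq> Attach \<Longrightarrow> tTS (Node c l r) = tTS l \<union> tTS r"
  by (cases c) auto

lemma tE_subset_tV: "e \<in> tE u \<Longrightarrow> e \<subseteq> tV u"
proof (induction u arbitrary: e rule: tE.induct)
  case (2 l r)
  then show ?case using tTS_subset_tV[of l] tTS_subset_tV[of r] by auto
next
  case (4 l r)
  then show ?case using tTS_subset_tV[of l] tTS_subset_tV[of r] by auto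
qed auto

lemma tE_children_subset: "tE l \<union> tE r \<subseteq> tE (Node c l r)"
  by (cases c) auto

lemma card_Un_disjoint_tV:
  assumes "tV l \<inter> tV r = {}" "A \<subseteq> tV l" "B \<subseteq> tV r"
  shows "card (A \<union> B) = card A + card B"
  using assms by (intro card_Un_disjoint) (auto intro: finite_subset[OF _ finite_tV])

lemma distinct_leaves_subtrees: "s \<in> subtrees T \<Longrightarrow> distinct_leaves T \<Longrightarrow> distinct_leaves s"
  by (induction T) auto

lemma k_feasible_subset_tV: "k_feasible u k S \<Longrightarrow> S \<subseteq> tV u"
  unfolding k_feasible_def by blast

lemma k_feasible_le_card_tTS: "k_feasible u k S \<Longrightarrow> k \<le> card (tTS u)"
  unfolding k_feasible_def
  by (auto intro!: card_mono finite_subset[OF tTS_subset_tV finite_tV])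

lemma feasible_pair_Node:
  assumes "tV l \<inter> tV r = {}"
    and "feasible_pair (tV l) (tTS l) (tE l) Sl Xl" "feasible_pair (tV r) (tTS r) (tE r) Sr Xr"
  shows "feasible_pair (tV (Node c l r)) (tTS l \<union> tTS r) (tE (Node c l r)) (Sl \<union> Sr) (Xl \<union> Xr)"
  using feasible_pair_Un[OF assms(2,3,1) tE_children_subset] by simp

lemma k_feasible_twin_Un:
  assumes "c \<noteq> Attach" "tV l \<inter> tV r = {}" "k_feasible l kl Sl" "k_feasible r kr Sr"
  shows "k_feasible (Node c l r) (kl + kr) (Sl \<union> Sr)"
proof -
  obtain Xl Xr where l: "feasible_pair (tV l) (tTS l) (tE l) Sl Xl" "card Xl = kl"
    and r: "feasible_pair (tV r) (tTS r) (tE r) Sr Xr" "card Xr = kr"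
    using assms(3,4) unfolding k_feasible_iff_feasible_pair by blast
  have "feasible_pair (tV (Node c l r)) (tTS (Node c l r)) (tE (Node c l r)) (Sl \<union> Sr) (Xl \<union> Xr)"
    unfolding tTS_Node_twin[OF assms(1)] by (rule feasible_pair_Node[OF assms(2) l(1) r(1)])
  moreover have "card (Xl \<union> Xr) = kl + kr"
    using l r card_Un_disjoint_tV[OF assms(2), of Xl Xr] unfolding feasible_pair_def by auto
  ultimately show ?thesis
    unfolding k_feasible_iff_feasible_pair by blast
qed

lemma k_feasible_Attach:
  assumes "tV l \<inter> tV r = {}" "k_feasible l k Sl" "k_feasible r 0 Sr"
  shows "\<exists>S. k_feasible (Node Attach l r) k S"
proof -
  obtain Xl where l: "feasible_pair (tV l) (tTS l) (tE l) Sl Xl" "card Xl = k"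
    using assms(2) unfolding k_feasible_iff_feasible_pair by blast
  obtain Xr where r: "feasible_pair (tV r) (tTS r) (tE r) Sr Xr" "card Xr = 0"
    using assms(3) unfolding k_feasible_iff_feasible_pair by blast
  then have "Xr = {}"
    using finite_subset[OF _ finite_tV[of r]] unfolding feasible_pair_def by auto
  then have "feasible_pair (tV (Node Attach l r)) (tTS l \<union> tTS r) (tE (Node Attach l r)) (Sl \<union> Sr) Xl"
    using feasible_pair_Node[OF assms(1) l(1) r(1), of Attach] by simp
  moreover have "\<forall>a\<in>tTS l. \<forall>b\<in>tTS r. {a, b} \<in> tE (Node Attach l r)"
    by auto
  moreover have "Xl \<subseteq> tTS l"
    using l(1) unfolding feasible_pair_def by blast
  ultimately have "\<exists>S. feasible_pair (tV (Node Attach l r)) (tTS l) (tE (Node Attach l r)) S Xl"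
    by (intro feasible_pair_attach) (use tTS_nonempty[of l] tTS_subset_tV[of l] tTS_subset_tV[of r] in auto)
  then show ?thesis
    unfolding k_feasible_iff_feasible_pair using l(2) by auto
qed

lemma k_feasible_Leaf: "k \<le> 1 \<Longrightarrow> \<exists>S. k_feasible (Leaf x) k S"
proof -
  assume "k \<le> 1"
  then obtain X where "X \<subseteq> {x}" "card X = k"
    by (intro that[of "if k = 0 then {} else {x}"]) auto
  then have "feasible_pair {x} {x} {} X X"
    unfolding feasible_pair_def by (auto simp: has_perfect_matching_empty)
  then show ?thesis
    unfolding k_feasible_iff_feasible_pair using \<open>card X = k\<close> by auto
qed

(* hgamma is a LEAST over k-feasible sets, which is junk unless one exists. *)
lemma k_feasible_exists:
  "distinct_leaves u \<Longrightarrow> k \<le> card (tTS u) \<Longrightarrow> \<exists>S. k_feasible u k S"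
proof (induction u arbitrary: k)
  case (Leaf x)
  then show ?case by (simp add: k_feasible_Leaf)
next
  case (Node c l r)
  have disj: "tV l \<inter> tV r = {}" and IH: "\<And>k. k \<le> card (tTS l) \<Longrightarrow> \<exists>S. k_feasible l k S"
      "\<And>k. k \<le> card (tTS r) \<Longrightarrow> \<exists>S. k_feasible r k S"
    using Node by auto
  show ?case
  proof (cases "c = Attach")
    case False
    define kl where "kl = min k (card (tTS l))"
    have "k \<le> card (tTS l) + card (tTS r)"
      using Node.prems(2) card_Un_disjoint_tV[OF disj tTS_subset_tV tTS_subset_tV]
      unfolding tTS_Node_twin[OF False] by simp
    then have "kl \<le> card (tTS l)" "k - kl \<le> card (tTS r)"
      unfolding kl_def by auto
    then obtain Sl Sr where "k_feasible l kl Sl" "k_feasible r (k - kl) Sr"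
      using IH by blast
    then have "k_feasible (Node c l r) (kl + (k - kl)) (Sl \<union> Sr)"
      by (rule k_feasible_twin_Un[OF False disj])
    then show ?thesis
      unfolding kl_def by auto
  next
    case True
    have "k \<le> card (tTS l)"
      using Node.prems True by simp
    then obtain Sl Sr where "k_feasible l k Sl" "k_feasible r 0 Sr"
      using IH by blast
    then show ?thesis
      using k_feasible_Attach[OF disj] True by blast
  qed
qed

lemma k_feasible_FalseTwin_split:
  assumes "tV l \<inter> tV r = {}" "k_feasible (Node FalseTwin l r) k S"
  obtains kl kr where "kl + kr = k" "k_feasible l kl (S \<inter> tV l)" "k_feasible r kr (S \<inter> tV r)"
proof -
  obtain X where f: "feasible_pair (tV l \<union> tV r) (tTS l \<union> tTS r) (tE l \<union> tE r) S X" and k: "card X = k"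
    using assms(2) unfolding k_feasible_iff_feasible_pair by auto
  have E: "\<forall>e\<in>tE l. e \<subseteq> tV l" "\<forall>e\<in>tE r. e \<subseteq> tV r"
    using tE_subset_tV by blast+
  have "feasible_pair (tV l) (tTS l) (tE l) (S \<inter> tV l) (X \<inter> tV l)"
    using feasible_pair_restrict[OF f assms(1) tTS_subset_tV E] .
  moreover have "feasible_pair (tV r) (tTS r) (tE r) (S \<inter> tV r) (X \<inter> tV r)"
  proof (rule feasible_pair_restrict[OF _ _ tTS_subset_tV E(2,1)])
    show "feasible_pair (tV r \<union> tV l) (tTS r \<union> tTS l) (tE r \<union> tE l) S X"
      using f by (simp add: Un_commute)
    show "tV r \<inter> tV l = {}"
      using assms(1) by blast
  qed
  moreover have "card (X \<inter> tV l) + card (X \<inter> tV r) = k"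
  proof -
    have "X = X \<inter> tV l \<union> X \<inter> tV r"
      using f unfolding feasible_pair_def by blast
    then show ?thesis
      using k card_Un_disjoint_tV[OF assms(1), of "X \<inter> tV l" "X \<inter> tV r"] by auto
  qed
  ultimately show ?thesis
    using that unfolding k_feasible_iff_feasible_pair by blast
qed

lemma hgamma_le_card: "k_feasible u k S \<Longrightarrow> hgamma u k \<le> card S"
  unfolding hgamma_def by (rule Least_le) blast

lemma hgamma_attained:
  assumes "distinct_leaves u" "k \<le> card (tTS u)"
  obtains S where "k_feasible u k S" "card S = hgamma u k"
proof -
  have "\<exists>n S. k_feasible u k S \<and> card S = n"
    using k_feasible_exists[OF assms] by blast
  from LeastI_ex[OF this] show ?thesis
    using that unfolding hgamma_def by blast
qed

lemma hmin_le_hgamma: "k \<le> card (tTS u) \<Longrightarrow> hmin u \<le> hgamma u k"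
  unfolding hmin_def by (rule Min_le) auto

lemma halpha_le_card_tTS: "halpha u \<le> card (tTS u)"
  and hgamma_halpha: "hgamma u (halpha u) = hmin u"
proof -
  have "hmin u \<in> hgamma u ` {0..card (tTS u)}"
    unfolding hmin_def by (rule Min_in) auto
  then have "{k. k \<le> card (tTS u) \<and> hgamma u k = hmin u} \<noteq> {}"
    by auto
  then have "halpha u \<in> {k. k \<le> card (tTS u) \<and> hgamma u k = hmin u}"
    unfolding halpha_def by (intro Min_in) auto
  then show "halpha u \<le> card (tTS u)" "hgamma u (halpha u) = hmin u"
    by auto
qed

lemma hmin_less_hgamma: "k < halpha u \<Longrightarrow> hmin u < hgamma u k"
proof -
  assume k: "k < halpha u"
  then have "k \<le> card (tTS u)"
    using halpha_le_card_tTS[of u] by simp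
  moreover have "hgamma u k \<noteq> hmin u"
  proof
    assume "hgamma u k = hmin u"
    then have "halpha u \<le> k"
      unfolding halpha_def using \<open>k \<le> card (tTS u)\<close> by (intro Min_le) auto
    then show False
      using k by simp
  qed
  ultimately show ?thesis
    using hmin_le_hgamma[of k u] by simp
qed

lemma halpha_eqI:
  assumes "a \<le> card (tTS u)" "\<And>k. k \<le> card (tTS u) \<Longrightarrow> hgamma u a \<le> hgamma u k"
    and "\<And>k. k < a \<Longrightarrow> hgamma u a < hgamma u k"
  shows "halpha u = a"
proof -
  have "hmin u \<le> hgamma u a"
    using hmin_le_hgamma[OF assms(1)] .
  moreover have "hgamma u a \<le> hmin u"
    using assms(2)[OF halpha_le_card_tTS] unfolding hgamma_halpha .
  ultimately have hmin: "hmin u = hgamma u a"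
    by (rule antisym)
  show ?thesis
    unfolding halpha_def hmin
  proof (rule Min_eqI)
    show "finite {k. k \<le> card (tTS u) \<and> hgamma u k = hgamma u a}"
      by simp
    show "a \<in> {k. k \<le> card (tTS u) \<and> hgamma u k = hgamma u a}"
      using assms(1) by simp
    fix k
    assume "k \<in> {k. k \<le> card (tTS u) \<and> hgamma u k = hgamma u a}"
    then show "a \<le> k"
      using assms(3)[of k] by (cases "k < a") auto
  qed
qed

lemma hgamma_FalseTwin_le:
  assumes "distinct_leaves (Node FalseTwin l r)" "kl \<le> card (tTS l)" "kr \<le> card (tTS r)"
  shows "hgamma (Node FalseTwin l r) (kl + kr) \<le> hgamma l kl + hgamma r kr"
proof -
  have disj: "tV l \<inter> tV r = {}"
    using assms(1) by simp
  obtain Sl where l: "k_feasible l kl Sl" "card Sl = hgamma l kl"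
    using hgamma_attained[OF _ assms(2)] assms(1) by auto
  obtain Sr where r: "k_feasible r kr Sr" "card Sr = hgamma r kr"
    using hgamma_attained[OF _ assms(3)] assms(1) by auto
  have "hgamma (Node FalseTwin l r) (kl + kr) \<le> card (Sl \<union> Sr)"
    by (rule hgamma_le_card[OF k_feasible_twin_Un[OF _ disj l(1) r(1)]]) simp
  also have "\<dots> = hgamma l kl + hgamma r kr"
    using card_Un_disjoint_tV[OF disj k_feasible_subset_tV[OF l(1)] k_feasible_subset_tV[OF r(1)]] l(2) r(2)
    by simp
  finally show ?thesis .
qed

lemma hgamma_FalseTwin_ge:
  assumes "distinct_leaves (Node FalseTwin l r)" "k \<le> card (tTS (Node FalseTwin l r))"
  obtains kl kr where "kl + kr = k" "kl \<le> card (tTS l)" "kr \<le> card (tTS r)"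
    "hgamma l kl + hgamma r kr \<le> hgamma (Node FalseTwin l r) k"
proof -
  have disj: "tV l \<inter> tV r = {}"
    using assms(1) by simp
  obtain S where S: "k_feasible (Node FalseTwin l r) k S" "card S = hgamma (Node FalseTwin l r) k"
    using hgamma_attained[OF assms] .
  obtain kl kr where k: "kl + kr = k" and l: "k_feasible l kl (S \<inter> tV l)" and r: "k_feasible r kr (S \<inter> tV r)"
    using k_feasible_FalseTwin_split[OF disj S(1)] .
  have "hgamma l kl + hgamma r kr \<le> card (S \<inter> tV l) + card (S \<inter> tV r)"
    using hgamma_le_card[OF l] hgamma_le_card[OF r] by simp
  also have "\<dots> = card S"
  proof -
    have "S = S \<inter> tV l \<union> S \<inter> tV r"
      using k_feasible_subset_tV[OF S(1)] by auto
    then show ?thesis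
      using card_Un_disjoint_tV[OF disj, of "S \<inter> tV l" "S \<inter> tV r"] by auto
  qed
  finally show ?thesis
    using that k k_feasible_le_card_tTS[OF l] k_feasible_le_card_tTS[OF r] S(2) by simp
qed

lemma halpha_FalseTwin:
  assumes "distinct_leaves (Node FalseTwin l r)"
  shows "halpha (Node FalseTwin l r) = halpha l + halpha r"
proof -
  let ?v = "Node FalseTwin l r" and ?a = "halpha l + halpha r"
  have "card (tTS ?v) = card (tTS l) + card (tTS r)"
    using assms card_Un_disjoint_tV[of l r, OF _ tTS_subset_tV tTS_subset_tV] by simp
  then have a_le: "?a \<le> card (tTS ?v)"
    using halpha_le_card_tTS[of l] halpha_le_card_tTS[of r] by simp
  have at_alpha: "hgamma ?v ?a \<le> hmin l + hmin r"
    using hgamma_FalseTwin_le[OF assms halpha_le_card_tTS halpha_le_card_tTS]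
    unfolding hgamma_halpha .
  have lower: "hmin l + hmin r \<le> hgamma ?v k \<and> (k < ?a \<longrightarrow> hmin l + hmin r < hgamma ?v k)"
    if k_le: "k \<le> card (tTS ?v)" for k
  proof -
    obtain kl kr where k: "kl + kr = k" "kl \<le> card (tTS l)" "kr \<le> card (tTS r)"
      and ge: "hgamma l kl + hgamma r kr \<le> hgamma ?v k"
      using hgamma_FalseTwin_ge[OF assms k_le] .
    have "hmin l \<le> hgamma l kl" "hmin r \<le> hgamma r kr"
      using hmin_le_hgamma k(2,3) by auto
    moreover have "hmin l < hgamma l kl \<or> hmin r < hgamma r kr" if "k < ?a"
    proof -
      have "kl < halpha l \<or> kr < halpha r"
        using that k(1) by linarith
      then show ?thesis
        using hmin_less_hgamma by blast
    qed
    ultimately show ?thesis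
      using ge by linarith
  qed
  show ?thesis
  proof (rule halpha_eqI[OF a_le])
    show "hgamma ?v ?a \<le> hgamma ?v k" if "k \<le> card (tTS ?v)" for k
      using lower[OF that] at_alpha by linarith
    show "hgamma ?v ?a < hgamma ?v k" if "k < ?a" for k
      using lower[of k] at_alpha that a_le by linarith
  qed
qed

theorem lemma19:
  fixes T vl vr :: "'a dtree" and V :: "'a set" and E :: "'a set set"
  assumes "distance_hereditary V E"
    and "decomposition_tree T V E"
    and "Node FalseTwin vl vr \<in> subtrees T"
    and "propP vl" and "propP vr"
  shows "halpha (Node FalseTwin vl vr) = halpha vl + halpha vr"
proof -
  have "distinct_leaves (Node FalseTwin vl vr)"
    using distinct_leaves_subtrees assms(2,3) unfolding decomposition_tree_def by blast
  then show ?thesis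
    by (rule halpha_FalseTwin)
qed

end
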